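(* Let $n\ge 2$, $m_1,\dots,m_n>0$, $f:\mathbb{R}_{>0}\to\mathbb{R}_{>0}$ positive with $\sqrt{x}f(x)$ decreasing, and let $q_k(t)=p(t+h_k)$, $k=1,\dots,n$, be a choreographic solution of $$\ddot q_k=\sum_{j=1,\,j\neq k}^{n} m_j (q_j-q_k)\, f\!\left(\|q_j-q_k\|^2\right),\qquad k\in\{1,\dots,n\},$$ with $\sum_{k=1}^n m_kq_k=0$, for which the curve $p$ has an axis of symmetry. Then for all $l,k\in\{1,\dots,n\}$, $l\neq k$, and all $t$, writing $F(v)=v\,f(\|v\|^2)$: (i) $(m_k-m_l)F\big(p(t+h_l-h_k)-p(t)\big)=\sum_{j\neq k,l} m_j\Big(F\big(p(t+h_j-h_k)-p(t)\big)-F\big(p(t-(h_j-h_l))-p(t)\big)\Big)$; (ii) $(m_k-m_l)F\big(p(t+(h_l-h_k))-p(t)\big)=\sum_{j\neq k,l} m_j\Big(F\big(p(t+(h_j-h_k))-p(t+(h_l-h_k))\big)-F\big(p(t+(h_l-h_j))-p(t+(h_l-h_k))\big)\Big)$; (iii) $(m_k-m_l)\big(p(t+h_l-h_k)-p(t)\big)=\sum_{j\neq k,l} m_j\Big(\big(p(t+h_j-h_k)-p(t)\big)-\big(p(t-(h_j-h_l))-p(t)\big)\Big)$; (iv) $(m_k-m_l)\big(p(t+(h_l-h_k))-p(t)\big)=\sum_{j\neq k,l} m_j\Big(\big(p(t+(h_j-h_k))-p(t+(h_l-h_k))\big)-\big(p(t+(h_l-h_j))-p(t+(h_l-h_k))\big)\Big)$,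 where all sums run over $j\in\{1,\dots,n\}\setminus\{k,l\}$.
   Context: A choreographic solution is one for which there exist a twice continuously differentiable periodic function $p$ and constants $h_1,\dots,h_n$ with $q_k(t)=p(t+h_k)$. The axis of symmetry hypothesis is understood, as in the paper, as: $p$ takes values in $\mathbb{R}^2$ and $p(-t)=\begin{pmatrix}1&0\\0&-1\end{pmatrix}p(t)$ for all $t\in\mathbb{R}$. *)

theory Defs
  imports "HOL-Analysis.Analysis"
begin

definition C2_with :: "(real \<Rightarrow> 'a::real_normed_vector) \<Rightarrow> (real \<Rightarrow> 'a) \<Rightarrow> (real \<Rightarrow> 'a) \<Rightarrow> bool" where
  "C2_with p p' p'' \<longleftrightarrow>
     (\<forall>t. (p has_vector_derivative p' t) (at t)) \<and>
     (\<forall>t. (p' has_vector_derivative p'' t) (at t)) \<and>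
     continuous_on UNIV p''"

definition periodic_fun :: "(real \<Rightarrow> 'a) \<Rightarrow> bool" where
  "periodic_fun p \<longleftrightarrow> (\<exists>T>0. \<forall>t. p (t + T) = p t)"

definition Fforce :: "(real \<Rightarrow> real) \<Rightarrow> real^2 \<Rightarrow> real^2" where
  "Fforce f v = f ((norm v)\<^sup>2) *\<^sub>R v"

text \<open>Choreographic solution q_k(t) = p(t + h_k), k = 1..n, of
  q_k'' = sum_{j /= k} m_j (q_j - q_k) f(|q_j - q_k|^2), collision-free
  (so that f is evaluated only at positive arguments).\<close>
definition choreographic_solution ::
  "nat \<Rightarrow> (nat \<Rightarrow> real) \<Rightarrow> (real \<Rightarrow> real) \<Rightarrow> (real \<Rightarrow> real^2) \<Rightarrow> (nat \<Rightarrow> real) \<Rightarrow> bool" where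
  "choreographic_solution n m f p h \<longleftrightarrow>
     periodic_fun p \<and>
     (\<exists>p' p''. C2_with p p' p'' \<and>
        (\<forall>k\<in>{1..n}. \<forall>t.
           p'' (t + h k) = (\<Sum>j\<in>{1..n} - {k}. m j *\<^sub>R Fforce f (p (t + h j) - p (t + h k))))) \<and>
     (\<forall>k\<in>{1..n}. \<forall>j\<in>{1..n}. j \<noteq> k \<longrightarrow> (\<forall>t. p (t + h j) \<noteq> p (t + h k)))"

definition refl_mat :: "real^2^2" where
  "refl_mat = vector [vector [1, 0], vector [0, -1]]"

definition axis_symmetric :: "(real \<Rightarrow> real^2) \<Rightarrow> bool" where
  "axis_symmetric p \<longleftrightarrow> (\<forall>t. p (- t) = refl_mat *v p t)"

end

theory Submission
  imports Defs
begin

text \<open>Shifting time by h k, the equation of body k expresses p'' t as a weighted sum of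
  forces F(p(t + h j - h k) - p t) over j \<noteq> k. Since p(-t) = R p(t) for the reflection R, also
  p''(-t) = R p''(t), and F commutes with R; so evaluating the same equation at -t gives a second
  such sum, with shifts -(h j - h l), for any index l. The sums for k and for l share the term of
  the pair k, l, and equating them gives (i). The centre of mass condition gives two sums of the
  same shape with F replaced by the identity, hence (iii). The identities (ii) and (iv) are (i) and
  (iii) with k and l exchanged, evaluated at t + h l - h k and rewritten using that F is odd.\<close>

lemma reflection_symmetric_derivative:
  fixes p p' :: "real \<Rightarrow> 'a::real_normed_vector"
  assumes r: "bounded_linear r" and sym: "\<And>t. p (- t) = r (p t)"
    and deriv: "\<And>t. (p has_vector_derivative p' t) (at t)"
  shows "p' (- t) = - r (p' t)"
proof -
  have "(uminus has_vector_derivative (-1)) (at t)"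
    by (auto intro!: derivative_eq_intros simp: has_real_derivative_iff_has_vector_derivative[symmetric])
  then have "((p \<circ> uminus) has_vector_derivative (-1) *\<^sub>R p' (- t)) (at t)"
    using deriv vector_diff_chain_at by fastforce
  moreover have "p \<circ> uminus = (\<lambda>t. r (p t))"
    using sym by auto
  moreover have "((\<lambda>t. r (p t)) has_vector_derivative r (p' t)) (at t)"
    using bounded_linear.has_vector_derivative[OF r deriv] .
  ultimately show ?thesis
    by (metis vector_derivative_unique_at add.inverse_inverse scaleR_minus1_left)
qed

lemma C2_with_reflection_symmetric:
  assumes "C2_with p p' p''" and r: "bounded_linear r" and sym: "\<And>t. p (- t) = r (p t)"
  shows "p'' (- t) = r (p'' t)"
proof -
  have "p' (- t) = - r (p' t)" for t
    using reflection_symmetric_derivative[where p = p and r = r, OF r sym] assms(1)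
    by (auto simp: C2_with_def)
  then have "p'' (- t) = - (- r (p'' t))"
    using reflection_symmetric_derivative[where p = p' and r = "\<lambda>v. - r v",
        OF bounded_linear_minus[OF r]] assms(1)
    by (auto simp: C2_with_def)
  then show ?thesis
    by simp
qed

lemma refl_mat_mult_nth: "(refl_mat *v v) $ 1 = v $ 1" "(refl_mat *v v) $ 2 = - v $ 2"
  by (simp_all add: refl_mat_def matrix_vector_mult_def sum_2 vector_def)

lemma refl_mat_mult_involutive [simp]: "refl_mat *v (refl_mat *v v) = v"
  by (simp add: vec_eq_iff forall_2 refl_mat_mult_nth)

lemma inj_refl_mat_mult: "inj ((*v) refl_mat)"
  by (metis injI refl_mat_mult_involutive)

lemma norm_refl_mat_mult: "norm (refl_mat *v v) = norm v"
  by (simp add: norm_vec_def L2_set_def sum_2 refl_mat_mult_nth)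

lemma Fforce_refl_mat_mult: "Fforce f (refl_mat *v v) = refl_mat *v Fforce f v"
  by (simp add: Fforce_def norm_refl_mat_mult vec_eq_iff forall_2 refl_mat_mult_nth)

lemma Fforce_minus: "Fforce f (- v) = - Fforce f v"
  by (simp add: Fforce_def)

lemma axis_symmetricD: "axis_symmetric p \<Longrightarrow> p (- t) = refl_mat *v p t"
  by (simp add: axis_symmetric_def)

lemma reflected_weighted_sum:
  fixes p A :: "real \<Rightarrow> 'a::real_vector"
  assumes R: "linear R" "inj R" and p_sym: "\<And>t. p (- t) = R (p t)"
    and G_sym: "\<And>v. G (R v) = R (G v)" and A_sym: "\<And>s. A (- s) = R (A s)"
    and A_sum: "\<And>s. A s = (\<Sum>j\<in>J. m j *\<^sub>R G (p (s + c j) - p s))"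
  shows "A s = (\<Sum>j\<in>J. m j *\<^sub>R G (p (s - c j) - p s))"
proof -
  have "R (A s) = (\<Sum>j\<in>J. m j *\<^sub>R G (p (- (s - c j)) - p (- s)))"
    using A_sym A_sum[of "- s"] by simp
  also have "\<dots> = (\<Sum>j\<in>J. m j *\<^sub>R R (G (p (s - c j) - p s)))"
    by (simp only: p_sym G_sym linear_diff[OF R(1), symmetric])
  also have "\<dots> = R (\<Sum>j\<in>J. m j *\<^sub>R G (p (s - c j) - p s))"
    by (simp add: linear_sum[OF R(1)] linear_scale[OF R(1)])
  finally show ?thesis
    using R(2) by (simp add: inj_eq)
qed

lemma sum_exchange_identity:
  fixes a b :: "'i \<Rightarrow> 'a::real_vector"
  assumes "finite I" "k \<in> I" "l \<in> I" "l \<noteq> k"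
    and sums: "(\<Sum>j\<in>I - {k}. m j *\<^sub>R a j) = (\<Sum>j\<in>I - {l}. m j *\<^sub>R b j)"
    and shared: "a l = b k"
  shows "(m k - m l) *\<^sub>R a l = (\<Sum>j\<in>I - {k, l}. m j *\<^sub>R (a j - b j))"
proof -
  have remove: "sum g (I - {i}) = g i' + sum g (I - {k, l})" if "{i, i'} = {k, l}" "i \<noteq> i'"
    for g :: "'i \<Rightarrow> 'a" and i i'
  proof -
    have "I - {k, l} = I - {i} - {i'}"
      using that by auto
    moreover have "i' \<in> I - {i}"
      using that assms(2,3) by auto
    ultimately show ?thesis
      using sum.remove[OF finite_Diff[OF \<open>finite I\<close>]] by metis
  qed
  have "m l *\<^sub>R a l + (\<Sum>j\<in>I - {k, l}. m j *\<^sub>R a j)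
      = m k *\<^sub>R a l + (\<Sum>j\<in>I - {k, l}. m j *\<^sub>R b j)"
    using sums remove[of k l] remove[of l k] shared assms(4) by (simp add: insert_commute)
  then show ?thesis
    by (simp add: scaleR_diff_right sum_subtractf algebra_simps)
qed

lemma exchange_identity:
  fixes G :: "'a::real_vector \<Rightarrow> 'b::real_vector" and p :: "real \<Rightarrow> 'a" and h :: "'i \<Rightarrow> real"
  assumes "finite I" "k \<in> I" "l \<in> I" "l \<noteq> k"
    and fwd: "\<And>s. A s = (\<Sum>j\<in>I - {k}. m j *\<^sub>R G (p (s + (h j - h k)) - p s))"
    and bwd: "\<And>s. A s = (\<Sum>j\<in>I - {l}. m j *\<^sub>R G (p (s - (h j - h l)) - p s))"
  shows "(m k - m l) *\<^sub>R G (p (t + (h l - h k)) - p t)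
    = (\<Sum>j\<in>I - {k, l}. m j *\<^sub>R
        (G (p (t + (h j - h k)) - p t) - G (p (t - (h j - h l)) - p t)))"
proof (rule sum_exchange_identity[OF assms(1-4), where a = "\<lambda>j. G (p (t + (h j - h k)) - p t)"
      and b = "\<lambda>j. G (p (t - (h j - h l)) - p t)"])
  show "(\<Sum>j\<in>I - {k}. m j *\<^sub>R G (p (t + (h j - h k)) - p t))
      = (\<Sum>j\<in>I - {l}. m j *\<^sub>R G (p (t - (h j - h l)) - p t))"
    using fwd bwd by metis
qed (simp add: algebra_simps)

lemma exchange_identity_shifted:
  fixes G :: "'a::real_vector \<Rightarrow> 'b::real_vector" and p :: "real \<Rightarrow> 'a" and h :: "'i \<Rightarrow> real"
  assumes "finite I" "k \<in> I" "l \<in> I" "l \<noteq> k" and odd: "\<And>v. G (- v) = - G v"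
    and fwd: "\<And>s. A s = (\<Sum>j\<in>I - {l}. m j *\<^sub>R G (p (s + (h j - h l)) - p s))"
    and bwd: "\<And>s. A s = (\<Sum>j\<in>I - {k}. m j *\<^sub>R G (p (s - (h j - h k)) - p s))"
  shows "(m k - m l) *\<^sub>R G (p (t + (h l - h k)) - p t)
    = (\<Sum>j\<in>I - {k, l}. m j *\<^sub>R
        (G (p (t + (h j - h k)) - p (t + (h l - h k)))
         - G (p (t + (h l - h j)) - p (t + (h l - h k)))))"
proof -
  define s where "s = t + (h l - h k)"
  have "(m l - m k) *\<^sub>R G (p (s + (h k - h l)) - p s)
      = (\<Sum>j\<in>I - {l, k}. m j *\<^sub>R
          (G (p (s + (h j - h l)) - p s) - G (p (s - (h j - h k)) - p s)))"
    using exchange_identity[OF assms(1,3,2) assms(4)[symmetric] fwd bwd] .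
  moreover have "G (p t - p s) = - G (p s - p t)"
    using odd[of "p s - p t"] by (simp only: minus_diff_eq)
  ultimately show ?thesis
    by (simp add: s_def insert_commute algebra_simps)
qed

lemma choreography_acceleration_sums:
  assumes sol: "choreographic_solution n m f p h" and sym: "axis_symmetric p"
  obtains a :: "real \<Rightarrow> real^2" where
    "\<And>k s. k \<in> {1..n} \<Longrightarrow> a s = (\<Sum>j\<in>{1..n} - {k}. m j *\<^sub>R Fforce f (p (s + (h j - h k)) - p s))"
    "\<And>k s. k \<in> {1..n} \<Longrightarrow> a s = (\<Sum>j\<in>{1..n} - {k}. m j *\<^sub>R Fforce f (p (s - (h j - h k)) - p s))"
proof -
  obtain p' p'' where C2: "C2_with p p' p''"
    and motion: "\<forall>k\<in>{1..n}. \<forall>t.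
      p'' (t + h k) = (\<Sum>j\<in>{1..n} - {k}. m j *\<^sub>R Fforce f (p (t + h j) - p (t + h k)))"
    using sol unfolding choreographic_solution_def by blast
  note p_sym = axis_symmetricD[OF sym]
  have fwd: "p'' s = (\<Sum>j\<in>{1..n} - {k}. m j *\<^sub>R Fforce f (p (s + (h j - h k)) - p s))"
    if "k \<in> {1..n}" for k s
  proof -
    have "p'' (s - h k + h k)
        = (\<Sum>j\<in>{1..n} - {k}. m j *\<^sub>R Fforce f (p (s - h k + h j) - p (s - h k + h k)))"
      using motion that by blast
    then show ?thesis
      by (simp add: algebra_simps)
  qed
  moreover have "p'' s = (\<Sum>j\<in>{1..n} - {k}. m j *\<^sub>R Fforce f (p (s - (h j - h k)) - p s))"
    if "k \<in> {1..n}" for k s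
    by (rule reflected_weighted_sum[OF matrix_vector_mul_linear inj_refl_mat_mult p_sym
          Fforce_refl_mat_mult C2_with_reflection_symmetric[OF C2 matrix_vector_mul_bounded_linear p_sym]
          fwd[OF that]])
  ultimately show thesis
    using that by blast
qed

lemma centre_of_mass_sums:
  fixes n :: nat and p :: "real \<Rightarrow> real^2"
  assumes com: "\<forall>t. (\<Sum>k=1..n. m k *\<^sub>R p (t + h k)) = 0" and sym: "axis_symmetric p"
  shows "- (\<Sum>j=1..n. m j) *\<^sub>R p s = (\<Sum>j\<in>{1..n} - {k}. m j *\<^sub>R (p (s + (h j - h k)) - p s))"
    and "- (\<Sum>j=1..n. m j) *\<^sub>R p s = (\<Sum>j\<in>{1..n} - {k}. m j *\<^sub>R (p (s - (h j - h k)) - p s))"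
proof -
  have fwd: "- (\<Sum>j=1..n. m j) *\<^sub>R p s
      = (\<Sum>j\<in>{1..n} - {k}. m j *\<^sub>R (p (s + (h j - h k)) - p s))" for s
  proof -
    have "(\<Sum>j\<in>{1..n} - {k}. m j *\<^sub>R (p (s + (h j - h k)) - p s))
        = (\<Sum>j=1..n. m j *\<^sub>R (p (s + (h j - h k)) - p s))"
      by (simp add: sum_diff1)
    also have "\<dots> = (\<Sum>j=1..n. m j *\<^sub>R p (s - h k + h j)) - (\<Sum>j=1..n. m j) *\<^sub>R p s"
      by (simp add: scaleR_diff_right sum_subtractf scaleR_sum_left algebra_simps)
    also have "\<dots> = - (\<Sum>j=1..n. m j) *\<^sub>R p s"
      using com by simp
    finally show ?thesis
      by simp
  qed
  then show "- (\<Sum>j=1..n. m j) *\<^sub>R p s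
      = (\<Sum>j\<in>{1..n} - {k}. m j *\<^sub>R (p (s + (h j - h k)) - p s))" .
  note p_sym = axis_symmetricD[OF sym]
  note R = matrix_vector_mul_linear[of refl_mat] inj_refl_mat_mult
  show "- (\<Sum>j=1..n. m j) *\<^sub>R p s = (\<Sum>j\<in>{1..n} - {k}. m j *\<^sub>R (p (s - (h j - h k)) - p s))"
    by (rule reflected_weighted_sum[where G = "\<lambda>v. v", OF R p_sym refl _ fwd])
      (simp add: p_sym linear_scale[OF R(1)] linear_neg[OF R(1)])
qed

theorem lemma2:
  fixes n :: nat and m :: "nat \<Rightarrow> real" and f :: "real \<Rightarrow> real"
    and p :: "real \<Rightarrow> real^2" and h :: "nat \<Rightarrow> real"
  assumes n2: "n \<ge> 2"
    and mpos: "\<forall>k\<in>{1..n}. m k > 0"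
    and fpos: "\<forall>x>0. f x > 0"
    and fdec: "\<forall>x y. 0 < x \<and> x < y \<longrightarrow> sqrt y * f y < sqrt x * f x"
    and sol: "choreographic_solution n m f p h"
    and com: "\<forall>t. (\<Sum>k=1..n. m k *\<^sub>R p (t + h k)) = 0"
    and sym: "axis_symmetric p"
    and l: "l \<in> {1..n}" and k: "k \<in> {1..n}" and lk: "l \<noteq> k"
  shows
   "(\<forall>t. (m k - m l) *\<^sub>R Fforce f (p (t + h l - h k) - p t)
        = (\<Sum>j\<in>{1..n} - {k, l}. m j *\<^sub>R
            (Fforce f (p (t + h j - h k) - p t) - Fforce f (p (t - (h j - h l)) - p t)))) \<and>
   (\<forall>t. (m k - m l) *\<^sub>R Fforce f (p (t + (h l - h k)) - p t)
        = (\<Sum>j\<in>{1..n} - {k, l}. m j *\<^sub>R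
            (Fforce f (p (t + (h j - h k)) - p (t + (h l - h k)))
             - Fforce f (p (t + (h l - h j)) - p (t + (h l - h k)))))) \<and>
   (\<forall>t. (m k - m l) *\<^sub>R (p (t + h l - h k) - p t)
        = (\<Sum>j\<in>{1..n} - {k, l}. m j *\<^sub>R
            ((p (t + h j - h k) - p t) - (p (t - (h j - h l)) - p t)))) \<and>
   (\<forall>t. (m k - m l) *\<^sub>R (p (t + (h l - h k)) - p t)
        = (\<Sum>j\<in>{1..n} - {k, l}. m j *\<^sub>R
            ((p (t + (h j - h k)) - p (t + (h l - h k)))
             - (p (t + (h l - h j)) - p (t + (h l - h k))))))"
proof -
  obtain a where acc_fwd: "\<And>k s. k \<in> {1..n} \<Longrightarrow>
        a s = (\<Sum>j\<in>{1..n} - {k}. m j *\<^sub>R Fforce f (p (s + (h j - h k)) - p s))"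
    and acc_bwd: "\<And>k s. k \<in> {1..n} \<Longrightarrow>
        a s = (\<Sum>j\<in>{1..n} - {k}. m j *\<^sub>R Fforce f (p (s - (h j - h k)) - p s))"
    using choreography_acceleration_sums[OF sol sym] by blast
  note com_fwd = centre_of_mass_sums(1)[OF com sym] and com_bwd = centre_of_mass_sums(2)[OF com sym]
  have fin: "finite {1..n}"
    by simp
  note force = exchange_identity[OF fin k l lk acc_fwd[OF k] acc_bwd[OF l]]
    exchange_identity_shifted[OF fin k l lk Fforce_minus acc_fwd[OF l] acc_bwd[OF k]]
  note position = exchange_identity[where G = "\<lambda>v. v", OF fin k l lk com_fwd com_bwd]
    exchange_identity_shifted[where G = "\<lambda>v. v", OF fin k l lk refl com_fwd com_bwd]
  show ?thesis
    using force position by (simp add: add_diff_eq)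
qed

end
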